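(* Let $(X,\mathcal{U})$ be a uniform space with $\mathcal{F}$, $\mathcal{V}$, $G$ as in the context, and let $T:X\to X$ be a Ćirić-$G$-contraction. Then for every $x\in X_T$ the sequence $\{T^nx\}$ is Cauchy in $X$.
   Context: A uniform space $(X,\mathcal{U})$ is a nonempty set $X$ with a uniformity $\mathcal{U}$ on $X$. For $U,V\subseteq X\times X$, $\Delta(X)=\{(x,x):x\in X\}$ and $U\circ V=\{(x,y):\exists z\in X,\ (x,z)\in V,\ (z,y)\in U\}$. A sequence $\{x_n\}$ is Cauchy if for every $U\in\mathcal{U}$ there is $N$ with $(x_m,x_n)\in U$ for $m,n\ge N$. $\mathcal{F}$ is a nonempty collection of (uniformly continuous) pseudometrics on $X$ generating $\mathcal{U}$, and $\mathcal{V}$ is the family of all sets $V=\bigcap_{i=1}^m\{(x,y)\in X\times X:\rho_i(x,y)<r_i\}$ with $m\ge1$, $\rho_i\in\mathcal{F}$, $r_i>0$; $\mathcal{V}$ is a base for $\mathcal{U}$. For such $V$ and $\beta>0$, $\beta V=\bigcap_{i=1}^m\{(x,y):\rho_i(x,y)<\beta r_i\}$. $G$ is a directed graph without parallel edges with vertex set $X$ and edge set $E(G)\subseteq X\times X$ containing $\Delta(X)$. For $T:X\to X$, $X_T=\{x\in X:(x,Tx)\in E(G)\}$. A map $T:X\to X$ is a Ćirić-$G$-contraction if (C1) $(x,y)\in E(G)$ implies $(Tx,Ty)\in E(G)$; and (C2) there are positive-valued functions $a_1,a_2,a_3,a_4$ on $X\times X$ with $\sup\{a_1(x,y)+a_2(x,y)+a_3(x,y)+2a_4(x,y):x,y\in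 X\}=\alpha<1$ such that for all $x,y\in X$ and all $V_1,\dots,V_5\in\mathcal{V}$: if $(x,y)\in E(G)\cap V_1$, $(x,Tx)\in V_2$, $(y,Ty)\in V_3$, $(x,Ty)\in V_4$, $(y,Tx)\in V_5$, then $(Tx,Ty)\in a_1(x,y)V_1\circ a_2(x,y)V_2\circ a_3(x,y)V_3\circ a_4(x,y)V_4\circ a_4(x,y)V_5$. *)

theory Defs
  imports Complex_Main
begin

definition pseudometric :: "('a \<Rightarrow> 'a \<Rightarrow> real) \<Rightarrow> bool" where
  "pseudometric \<rho> \<longleftrightarrow> (\<forall>x. \<rho> x x = 0) \<and> (\<forall>x y. 0 \<le> \<rho> x y) \<and>
     (\<forall>x y. \<rho> x y = \<rho> y x) \<and> (\<forall>x y z. \<rho> x z \<le> \<rho> x y + \<rho> y z)"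

text \<open>A basic entourage is represented by a nonempty finite list of pairs (rho_i, r_i)
  with rho_i in F and r_i > 0.\<close>
definition basic_rep :: "('a \<Rightarrow> 'a \<Rightarrow> real) set \<Rightarrow> (('a \<Rightarrow> 'a \<Rightarrow> real) \<times> real) list \<Rightarrow> bool" where
  "basic_rep F rs \<longleftrightarrow> rs \<noteq> [] \<and> (\<forall>(\<rho>, r) \<in> set rs. \<rho> \<in> F \<and> 0 < r)"

text \<open>beta V for V represented by rs; ent rs = 1 V.\<close>
definition scaled_ent :: "real \<Rightarrow> (('a \<Rightarrow> 'a \<Rightarrow> real) \<times> real) list \<Rightarrow> ('a \<times> 'a) set" where
  "scaled_ent \<beta> rs = {(x, y). \<forall>(\<rho>, r) \<in> set rs. \<rho> x y < \<beta> * r}"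

definition ent :: "(('a \<Rightarrow> 'a \<Rightarrow> real) \<times> real) list \<Rightarrow> ('a \<times> 'a) set" where
  "ent rs = scaled_ent 1 rs"

definition basic_ents :: "('a \<Rightarrow> 'a \<Rightarrow> real) set \<Rightarrow> ('a \<times> 'a) set set" where
  "basic_ents F = {ent rs | rs. basic_rep F rs}"

definition unif :: "('a \<Rightarrow> 'a \<Rightarrow> real) set \<Rightarrow> ('a \<times> 'a) set set" where
  "unif F = {U. \<exists>V \<in> basic_ents F. V \<subseteq> U}"

definition ucomp :: "('a \<times> 'a) set \<Rightarrow> ('a \<times> 'a) set \<Rightarrow> ('a \<times> 'a) set" (infixr "\<circ>\<^sub>u" 75) where
  "U \<circ>\<^sub>u V = {(x, y). \<exists>z. (x, z) \<in> V \<and> (z, y) \<in> U}"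

definition unif_cauchy :: "('a \<Rightarrow> 'a \<Rightarrow> real) set \<Rightarrow> (nat \<Rightarrow> 'a) \<Rightarrow> bool" where
  "unif_cauchy F s \<longleftrightarrow> (\<forall>U \<in> unif F. \<exists>N. \<forall>m n. N \<le> m \<longrightarrow> N \<le> n \<longrightarrow> (s m, s n) \<in> U)"

definition X_T :: "('a \<times> 'a) set \<Rightarrow> ('a \<Rightarrow> 'a) \<Rightarrow> 'a set" where
  "X_T E T = {x. (x, T x) \<in> E}"

definition ciric_G_contraction ::
  "('a \<Rightarrow> 'a \<Rightarrow> real) set \<Rightarrow> ('a \<times> 'a) set \<Rightarrow> ('a \<Rightarrow> 'a) \<Rightarrow> bool" where
  "ciric_G_contraction F E T \<longleftrightarrow>
     (\<forall>x y. (x, y) \<in> E \<longrightarrow> (T x, T y) \<in> E) \<and>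
     (\<exists>a1 a2 a3 a4 :: 'a \<Rightarrow> 'a \<Rightarrow> real.
        (\<forall>x y. 0 < a1 x y \<and> 0 < a2 x y \<and> 0 < a3 x y \<and> 0 < a4 x y) \<and>
        bdd_above {a1 x y + a2 x y + a3 x y + 2 * a4 x y | x y. True} \<and>
        Sup {a1 x y + a2 x y + a3 x y + 2 * a4 x y | x y. True} < 1 \<and>
        (\<forall>x y V1 V2 V3 V4 V5.
           basic_rep F V1 \<longrightarrow> basic_rep F V2 \<longrightarrow> basic_rep F V3 \<longrightarrow>
           basic_rep F V4 \<longrightarrow> basic_rep F V5 \<longrightarrow>
           (x, y) \<in> E \<longrightarrow> (x, y) \<in> ent V1 \<longrightarrow> (x, T x) \<in> ent V2 \<longrightarrow>
           (y, T y) \<in> ent V3 \<longrightarrow> (x, T y) \<in> ent V4 \<longrightarrow> (y, T x) \<in> ent V5 \<longrightarrow>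
           (T x, T y) \<in> scaled_ent (a1 x y) V1 \<circ>\<^sub>u scaled_ent (a2 x y) V2 \<circ>\<^sub>u
                        scaled_ent (a3 x y) V3 \<circ>\<^sub>u scaled_ent (a4 x y) V4 \<circ>\<^sub>u
                        scaled_ent (a4 x y) V5))"

end

theory Submission
  imports Defs
begin

text \<open>Testing the Ciric condition against single-pseudometric entourages of radius
  \<open>\<rho>(\<dots>) + \<delta>\<close> and letting \<open>\<delta> \<rightarrow> 0\<close> turns it into the familiar Ciric inequality for every
  \<open>\<rho> \<in> F\<close>. Along the orbit of \<open>x \<in> X_T\<close> every consecutive pair is an edge, and the inequality
  with \<open>\<rho>(T\<^sup>n x, T\<^sup>n\<^sup>+\<^sup>2 x) \<le> d\<^sub>n + d\<^sub>n\<^sub>+\<^sub>1\<close> gives \<open>d\<^sub>n\<^sub>+\<^sub>1 \<le> \<alpha> d\<^sub>n\<close> for the consecutive distances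
  \<open>d\<^sub>n\<close>. Hence the orbit is Cauchy for each \<open>\<rho>\<close>, and a basic entourage involves finitely many
  of them.\<close>

lemma pseudometricD:
  assumes "pseudometric \<rho>"
  shows "\<rho> x x = 0" "0 \<le> \<rho> x y" "\<rho> x y = \<rho> y x" "\<rho> x y \<le> \<rho> x z + \<rho> z y"
  using assms unfolding pseudometric_def by blast+

lemma basic_rep_single: "basic_rep F [(\<rho>, r)] \<longleftrightarrow> \<rho> \<in> F \<and> 0 < r"
  by (simp add: basic_rep_def)

lemma mem_scaled_ent_single: "(u, v) \<in> scaled_ent b [(\<rho>, r)] \<longleftrightarrow> \<rho> u v < b * r"
  by (simp add: scaled_ent_def)

lemma mem_ent_single: "(u, v) \<in> ent [(\<rho>, r)] \<longleftrightarrow> \<rho> u v < r"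
  by (simp add: ent_def scaled_ent_def)

lemma ciric_inequality:
  fixes \<rho> :: "'a \<Rightarrow> 'a \<Rightarrow> real"
  assumes pm: "pseudometric \<rho>" and "\<rho> \<in> F"
    and pos: "0 < b1" "0 < b2" "0 < b3" "0 < b4"
    and H: "\<And>V1 V2 V3 V4 V5.
           basic_rep F V1 \<Longrightarrow> basic_rep F V2 \<Longrightarrow> basic_rep F V3 \<Longrightarrow>
           basic_rep F V4 \<Longrightarrow> basic_rep F V5 \<Longrightarrow>
           (x, y) \<in> ent V1 \<Longrightarrow> (x, Tx) \<in> ent V2 \<Longrightarrow>
           (y, Ty) \<in> ent V3 \<Longrightarrow> (x, Ty) \<in> ent V4 \<Longrightarrow> (y, Tx) \<in> ent V5 \<Longrightarrow>
           (Tx, Ty) \<in> scaled_ent b1 V1 \<circ>\<^sub>u scaled_ent b2 V2 \<circ>\<^sub>u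
                        scaled_ent b3 V3 \<circ>\<^sub>u scaled_ent b4 V4 \<circ>\<^sub>u scaled_ent b4 V5"
  shows "\<rho> Tx Ty \<le> b1 * \<rho> x y + b2 * \<rho> x Tx + b3 * \<rho> y Ty + b4 * (\<rho> x Ty + \<rho> y Tx)"
proof (rule field_le_epsilon)
  fix e :: real assume "0 < e"
  define S where "S = b1 + b2 + b3 + 2 * b4"
  have "0 < S" using pos by (simp add: S_def)
  define \<delta> where "\<delta> = e / S"
  have "0 < \<delta>" using \<open>0 < e\<close> \<open>0 < S\<close> by (simp add: \<delta>_def)
  let ?r1 = "\<rho> x y + \<delta>" and ?r2 = "\<rho> x Tx + \<delta>" and ?r3 = "\<rho> y Ty + \<delta>"
    and ?r4 = "\<rho> x Ty + \<delta>" and ?r5 = "\<rho> y Tx + \<delta>"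
  have "(Tx, Ty) \<in> scaled_ent b1 [(\<rho>, ?r1)] \<circ>\<^sub>u scaled_ent b2 [(\<rho>, ?r2)] \<circ>\<^sub>u
                    scaled_ent b3 [(\<rho>, ?r3)] \<circ>\<^sub>u scaled_ent b4 [(\<rho>, ?r4)] \<circ>\<^sub>u
                    scaled_ent b4 [(\<rho>, ?r5)]"
    by (rule H) (use \<open>\<rho> \<in> F\<close> \<open>0 < \<delta>\<close> pseudometricD(2)[OF pm]
        in \<open>simp_all add: basic_rep_single mem_ent_single add_nonneg_pos\<close>)
  then obtain z1 z2 z3 z4 where
    "\<rho> z1 Ty < b1 * ?r1" "\<rho> z2 z1 < b2 * ?r2" "\<rho> z3 z2 < b3 * ?r3"
    "\<rho> z4 z3 < b4 * ?r4" "\<rho> Tx z4 < b4 * ?r5"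
    by (auto simp: ucomp_def mem_scaled_ent_single)
  moreover have "\<rho> Tx Ty \<le> \<rho> Tx z4 + \<rho> z4 z3 + \<rho> z3 z2 + \<rho> z2 z1 + \<rho> z1 Ty"
    using pseudometricD(4)[OF pm, of Tx Ty z4] pseudometricD(4)[OF pm, of z4 Ty z3]
      pseudometricD(4)[OF pm, of z3 Ty z2] pseudometricD(4)[OF pm, of z2 Ty z1] by linarith
  ultimately have "\<rho> Tx Ty \<le> b1 * ?r1 + b2 * ?r2 + b3 * ?r3 + b4 * ?r4 + b4 * ?r5"
    by linarith
  also have "\<dots> = b1 * \<rho> x y + b2 * \<rho> x Tx + b3 * \<rho> y Ty + b4 * (\<rho> x Ty + \<rho> y Tx) + \<delta> * S"
    by (simp add: S_def algebra_simps)
  also have "\<delta> * S = e" using \<open>0 < S\<close> by (simp add: \<delta>_def)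
  finally show "\<rho> Tx Ty \<le> b1 * \<rho> x y + b2 * \<rho> x Tx + b3 * \<rho> y Ty + b4 * (\<rho> x Ty + \<rho> y Tx) + e" .
qed

text \<open>The Ciric inequality at a consecutive pair \<open>(u, Tu)\<close>, with \<open>d = \<rho>(u,Tu)\<close>,
  \<open>d' = \<rho>(Tu,T\<^sup>2u)\<close>, \<open>c = \<rho>(u,T\<^sup>2u)\<close> and \<open>\<rho>(Tu,Tu) = 0\<close>.\<close>
lemma ciric_ratio_step:
  fixes b1 b2 b3 b4 \<alpha> d d' c :: real
  assumes pos: "0 < b1" "0 < b2" "0 < b3" "0 < b4"
    and sum: "b1 + b2 + b3 + 2 * b4 \<le> \<alpha>" and "\<alpha> < 1"
    and "0 \<le> d" "0 \<le> d'"
    and ineq: "d' \<le> b1 * d + b2 * d + b3 * d' + b4 * c"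
    and c: "c \<le> d + d'"
  shows "d' \<le> \<alpha> * d"
proof -
  have "d' \<le> b1 * d + b2 * d + b3 * d' + b4 * (d + d')"
    using ineq mult_left_mono[OF c, of b4] pos by linarith
  hence A: "(1 - b3 - b4) * d' \<le> (b1 + b2 + b4) * d" by (simp add: algebra_simps)
  have "(b1 + b2 + b4) * d \<le> (\<alpha> - b3 - b4) * d"
    by (intro mult_right_mono) (use \<open>0 \<le> d\<close> sum pos in auto)
  also have "\<dots> \<le> (\<alpha> * (1 - b3 - b4)) * d"
  proof (rule mult_right_mono)
    have "\<alpha> * (b3 + b4) \<le> b3 + b4" using \<open>\<alpha> < 1\<close> pos sum by (intro mult_left_le_one_le) auto
    thus "\<alpha> - b3 - b4 \<le> \<alpha> * (1 - b3 - b4)" by (simp add: algebra_simps)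
  qed (use \<open>0 \<le> d\<close> in auto)
  finally have "(1 - b3 - b4) * d' \<le> (1 - b3 - b4) * (\<alpha> * d)"
    using A by (simp add: algebra_simps)
  moreover have "0 < 1 - b3 - b4" using sum \<open>\<alpha> < 1\<close> pos by linarith
  ultimately show ?thesis by simp
qed

lemma pseudometric_dist_le_geometric:
  assumes pm: "pseudometric \<rho>" and "0 \<le> \<alpha>" "\<alpha> < 1"
    and step: "\<And>n. \<rho> (s (Suc n)) (s (Suc (Suc n))) \<le> \<alpha> * \<rho> (s n) (s (Suc n))"
  shows "\<rho> (s m) (s (m + k)) \<le> \<rho> (s 0) (s 1) * \<alpha> ^ m / (1 - \<alpha>)"
proof -
  define d where "d n = \<rho> (s n) (s (Suc n))" for n
  have dn: "d n \<le> \<alpha> ^ n * d 0" for n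
  proof (induction n)
    case (Suc n)
    have "d (Suc n) \<le> \<alpha> * d n" using step by (simp add: d_def)
    also have "\<dots> \<le> \<alpha> * (\<alpha> ^ n * d 0)" using Suc \<open>0 \<le> \<alpha>\<close> by (rule mult_left_mono)
    finally show ?case by simp
  qed simp
  have partial: "\<rho> (s m) (s (m + k)) \<le> d 0 * (\<Sum>i<k. \<alpha> ^ (m + i))" for k
  proof (induction k)
    case 0 show ?case by (simp add: pseudometricD(1)[OF pm])
  next
    case (Suc k)
    have "\<rho> (s m) (s (m + Suc k)) \<le> \<rho> (s m) (s (m + k)) + d (m + k)"
      using pseudometricD(4)[OF pm, of "s m" "s (Suc (m + k))" "s (m + k)"] by (simp add: d_def)
    also have "\<dots> \<le> d 0 * (\<Sum>i<k. \<alpha> ^ (m + i)) + \<alpha> ^ (m + k) * d 0"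
      using Suc dn[of "m + k"] by linarith
    finally show ?case by (simp add: algebra_simps)
  qed
  have "(\<Sum>i<k. \<alpha> ^ (m + i)) = \<alpha> ^ m * ((1 - \<alpha> ^ k) / (1 - \<alpha>))"
    using \<open>\<alpha> < 1\<close> by (simp add: power_add sum_distrib_left[symmetric] sum_gp_strict)
  also have "\<dots> \<le> \<alpha> ^ m * (1 / (1 - \<alpha>))"
    using \<open>0 \<le> \<alpha>\<close> \<open>\<alpha> < 1\<close> by (intro mult_left_mono divide_right_mono) auto
  finally have "d 0 * (\<Sum>i<k. \<alpha> ^ (m + i)) \<le> d 0 * (\<alpha> ^ m * (1 / (1 - \<alpha>)))"
    by (rule mult_left_mono) (simp add: d_def pseudometricD(2)[OF pm])
  with partial[of k] show ?thesis by (simp add: d_def)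
qed

lemma pseudometric_cauchy_if_contractive:
  assumes pm: "pseudometric \<rho>" and "0 \<le> \<alpha>" "\<alpha> < 1" and "0 < r"
    and step: "\<And>n. \<rho> (s (Suc n)) (s (Suc (Suc n))) \<le> \<alpha> * \<rho> (s n) (s (Suc n))"
  shows "\<exists>N. \<forall>m n. N \<le> m \<longrightarrow> N \<le> n \<longrightarrow> \<rho> (s m) (s n) < r"
proof -
  let ?b = "\<lambda>N. \<rho> (s 0) (s 1) * \<alpha> ^ N / (1 - \<alpha>)"
  have "?b \<longlonglongrightarrow> \<rho> (s 0) (s 1) * 0 / (1 - \<alpha>)"
    by (intro tendsto_intros LIMSEQ_power_zero) (use \<open>0 \<le> \<alpha>\<close> \<open>\<alpha> < 1\<close> in auto)
  then obtain N where N: "?b N < r"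
    using order_tendstoD(2)[of ?b 0 sequentially r] \<open>0 < r\<close>
    by (auto simp: eventually_sequentially)
  have ordered: "\<rho> (s m) (s n) < r" if "N \<le> m" "m \<le> n" for m n
  proof -
    obtain k where "n = m + k" using \<open>m \<le> n\<close> le_Suc_ex by blast
    have "\<alpha> ^ m \<le> \<alpha> ^ N" using \<open>0 \<le> \<alpha>\<close> \<open>\<alpha> < 1\<close> \<open>N \<le> m\<close> by (simp add: power_decreasing)
    hence "?b m \<le> ?b N" using \<open>\<alpha> < 1\<close> pseudometricD(2)[OF pm]
      by (intro divide_right_mono mult_left_mono) auto
    with pseudometric_dist_le_geometric[where s = s, OF pm \<open>0 \<le> \<alpha>\<close> \<open>\<alpha> < 1\<close> step, of m k] N
    have "\<rho> (s m) (s (m + k)) < r" by linarith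
    with \<open>n = m + k\<close> show ?thesis by simp
  qed
  show ?thesis
    by (metis nle_le ordered pseudometricD(3)[OF pm])
qed

lemma unif_cauchyI:
  assumes "\<And>\<rho> r. \<rho> \<in> F \<Longrightarrow> 0 < r \<Longrightarrow> \<exists>N. \<forall>m n. N \<le> m \<longrightarrow> N \<le> n \<longrightarrow> \<rho> (s m) (s n) < r"
  shows "unif_cauchy F s"
  unfolding unif_cauchy_def
proof
  fix U assume "U \<in> unif F"
  then obtain rs where rs: "basic_rep F rs" and "ent rs \<subseteq> U"
    by (auto simp: unif_def basic_ents_def)
  have "\<forall>(\<rho>, r) \<in> set rs. eventually (\<lambda>N. \<forall>m n. N \<le> m \<longrightarrow> N \<le> n \<longrightarrow> \<rho> (s m) (s n) < r) sequentially"
  proof (clarify)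
    fix \<rho> r assume "(\<rho>, r) \<in> set rs"
    with rs assms obtain N where "\<forall>m n. N \<le> m \<longrightarrow> N \<le> n \<longrightarrow> \<rho> (s m) (s n) < r"
      by (fastforce simp: basic_rep_def)
    thus "eventually (\<lambda>N. \<forall>m n. N \<le> m \<longrightarrow> N \<le> n \<longrightarrow> \<rho> (s m) (s n) < r) sequentially"
      unfolding eventually_sequentially by (meson order_trans)
  qed
  hence "eventually (\<lambda>N. \<forall>(\<rho>, r) \<in> set rs. \<forall>m n. N \<le> m \<longrightarrow> N \<le> n \<longrightarrow> \<rho> (s m) (s n) < r) sequentially"
    by (simp add: eventually_ball_finite case_prod_beta)
  then obtain N where "\<forall>(\<rho>, r) \<in> set rs. \<forall>m n. N \<le> m \<longrightarrow> N \<le> n \<longrightarrow> \<rho> (s m) (s n) < r"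
    unfolding eventually_sequentially by blast
  hence "\<forall>m n. N \<le> m \<longrightarrow> N \<le> n \<longrightarrow> (s m, s n) \<in> ent rs"
    by (auto simp: ent_def scaled_ent_def)
  with \<open>ent rs \<subseteq> U\<close> show "\<exists>N. \<forall>m n. N \<le> m \<longrightarrow> N \<le> n \<longrightarrow> (s m, s n) \<in> U" by blast
qed

lemma ciric_G_contractionE:
  assumes "ciric_G_contraction F E T" and "\<forall>\<rho> \<in> F. pseudometric \<rho>"
  obtains a1 a2 a3 a4 :: "'a \<Rightarrow> 'a \<Rightarrow> real" and \<alpha> :: real where
    "\<And>x y. 0 < a1 x y \<and> 0 < a2 x y \<and> 0 < a3 x y \<and> 0 < a4 x y"
    "\<And>x y. a1 x y + a2 x y + a3 x y + 2 * a4 x y \<le> \<alpha>" "\<alpha> < 1"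
    "\<And>\<rho> x y. \<rho> \<in> F \<Longrightarrow> (x, y) \<in> E \<Longrightarrow>
       \<rho> (T x) (T y) \<le> a1 x y * \<rho> x y + a2 x y * \<rho> x (T x) + a3 x y * \<rho> y (T y)
                         + a4 x y * (\<rho> x (T y) + \<rho> y (T x))"
proof -
  from assms(1) obtain a1 a2 a3 a4 :: "'a \<Rightarrow> 'a \<Rightarrow> real" where
    pos: "\<forall>x y. 0 < a1 x y \<and> 0 < a2 x y \<and> 0 < a3 x y \<and> 0 < a4 x y" and
    bdd: "bdd_above {a1 x y + a2 x y + a3 x y + 2 * a4 x y | x y. True}" and
    sup: "Sup {a1 x y + a2 x y + a3 x y + 2 * a4 x y | x y. True} < 1" and
    C2: "\<forall>x y V1 V2 V3 V4 V5.
           basic_rep F V1 \<longrightarrow> basic_rep F V2 \<longrightarrow> basic_rep F V3 \<longrightarrow>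
           basic_rep F V4 \<longrightarrow> basic_rep F V5 \<longrightarrow>
           (x, y) \<in> E \<longrightarrow> (x, y) \<in> ent V1 \<longrightarrow> (x, T x) \<in> ent V2 \<longrightarrow>
           (y, T y) \<in> ent V3 \<longrightarrow> (x, T y) \<in> ent V4 \<longrightarrow> (y, T x) \<in> ent V5 \<longrightarrow>
           (T x, T y) \<in> scaled_ent (a1 x y) V1 \<circ>\<^sub>u scaled_ent (a2 x y) V2 \<circ>\<^sub>u
                        scaled_ent (a3 x y) V3 \<circ>\<^sub>u scaled_ent (a4 x y) V4 \<circ>\<^sub>u
                        scaled_ent (a4 x y) V5"
    unfolding ciric_G_contraction_def by blast
  have "a1 x y + a2 x y + a3 x y + 2 * a4 x y
          \<le> Sup {a1 x y + a2 x y + a3 x y + 2 * a4 x y | x y. True}" for x y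
    by (rule cSup_upper[OF _ bdd]) blast
  moreover have "\<rho> (T x) (T y) \<le> a1 x y * \<rho> x y + a2 x y * \<rho> x (T x) + a3 x y * \<rho> y (T y)
                         + a4 x y * (\<rho> x (T y) + \<rho> y (T x))"
    if "\<rho> \<in> F" "(x, y) \<in> E" for \<rho> x y
    using assms(2) that pos C2 by (intro ciric_inequality) auto
  ultimately show thesis using that[of a1 a2 a3 a4] pos sup by blast
qed

lemma ciric_G_contraction_consecutive:
  assumes "ciric_G_contraction F E T" and "\<forall>\<rho> \<in> F. pseudometric \<rho>"
  obtains \<alpha> :: real where "0 \<le> \<alpha>" "\<alpha> < 1"
    "\<And>\<rho> u. \<rho> \<in> F \<Longrightarrow> (u, T u) \<in> E \<Longrightarrow> \<rho> (T u) (T (T u)) \<le> \<alpha> * \<rho> u (T u)"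
proof -
  obtain a1 a2 a3 a4 :: "'a \<Rightarrow> 'a \<Rightarrow> real" and \<alpha> :: real where
    pos: "\<And>u v. 0 < a1 u v \<and> 0 < a2 u v \<and> 0 < a3 u v \<and> 0 < a4 u v"
    and le_\<alpha>: "\<And>u v. a1 u v + a2 u v + a3 u v + 2 * a4 u v \<le> \<alpha>" and "\<alpha> < 1"
    and ciric: "\<And>\<rho> x y. \<rho> \<in> F \<Longrightarrow> (x, y) \<in> E \<Longrightarrow>
       \<rho> (T x) (T y) \<le> a1 x y * \<rho> x y + a2 x y * \<rho> x (T x) + a3 x y * \<rho> y (T y)
                         + a4 x y * (\<rho> x (T y) + \<rho> y (T x))"
    using ciric_G_contractionE[OF assms] by blast
  have "0 \<le> \<alpha>" using le_\<alpha>[of undefined undefined] pos[of undefined undefined] by linarith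
  moreover have "\<rho> (T u) (T (T u)) \<le> \<alpha> * \<rho> u (T u)" if "\<rho> \<in> F" and "(u, T u) \<in> E" for \<rho> u
  proof -
    have pm: "pseudometric \<rho>" using assms(2) \<open>\<rho> \<in> F\<close> by blast
    show ?thesis
      by (rule ciric_ratio_step[of "a1 u (T u)" "a2 u (T u)" "a3 u (T u)" "a4 u (T u)" _ _ _
            "\<rho> u (T (T u))"])
        (use pos[of u "T u"] le_\<alpha> \<open>\<alpha> < 1\<close> ciric[OF that] pseudometricD(1,2)[OF pm]
          pseudometricD(4)[OF pm, of u "T (T u)" "T u"] in auto)
  qed
  ultimately show thesis using that \<open>\<alpha> < 1\<close> by blast
qed

theorem lemma3:
  fixes F :: "('a \<Rightarrow> 'a \<Rightarrow> real) set" and E :: "('a \<times> 'a) set" and T :: "'a \<Rightarrow> 'a" and x :: 'a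
  assumes "F \<noteq> {}"
    and "\<forall>\<rho> \<in> F. pseudometric \<rho>"
    and "\<forall>z. (z, z) \<in> E"
    and "ciric_G_contraction F E T"
    and "x \<in> X_T E T"
  shows "unif_cauchy F (\<lambda>n. (T ^^ n) x)"
proof -
  obtain \<alpha> where "0 \<le> \<alpha>" "\<alpha> < 1" and contract:
    "\<And>\<rho> u. \<rho> \<in> F \<Longrightarrow> (u, T u) \<in> E \<Longrightarrow> \<rho> (T u) (T (T u)) \<le> \<alpha> * \<rho> u (T u)"
    using ciric_G_contraction_consecutive[OF assms(4,2)] by blast
  have orbit_edge: "((T ^^ n) x, T ((T ^^ n) x)) \<in> E" for n
    by (induction n) (use assms(4,5) in \<open>auto simp: X_T_def ciric_G_contraction_def\<close>)
  show ?thesis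
  proof (rule unif_cauchyI)
    fix \<rho> r assume "\<rho> \<in> F" "0 < (r :: real)"
    have pm: "pseudometric \<rho>" using assms(2) \<open>\<rho> \<in> F\<close> by blast
    have "\<rho> ((T ^^ Suc n) x) ((T ^^ Suc (Suc n)) x) \<le> \<alpha> * \<rho> ((T ^^ n) x) ((T ^^ Suc n) x)" for n
      using contract[OF \<open>\<rho> \<in> F\<close> orbit_edge[of n]] by simp
    then show "\<exists>N. \<forall>m n. N \<le> m \<longrightarrow> N \<le> n \<longrightarrow> \<rho> ((T ^^ m) x) ((T ^^ n) x) < r"
      by (rule pseudometric_cauchy_if_contractive[OF pm \<open>0 \<le> \<alpha>\<close> \<open>\<alpha> < 1\<close> \<open>0 < r\<close>])
  qed
qed

end
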